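(* Let $S$ be a finite semigroup whose minimal ideal $J$ consists of right zeroes and such that $S$ acts faithfully on the right of $J$. Then $\llbracket S\rrbracket^{\mathsf{bar}}=\llbracket S\rrbracket$.
   Context: A pseudovariety is a class of finite semigroups closed under finite direct products, subsemigroups and homomorphic images; $\llbracket\mathscr{K}\rrbracket$ is the pseudovariety generated by $\mathscr{K}$. An element $z$ is a right zero if $sz=z$ for all $s$. For a semigroup $S$, $S^\bullet=S$ if $S$ is a monoid and $S^\bullet=S^I$ (external identity adjoined) otherwise; $S^{\mathsf{bar}}$ is the semigroup of transformations of $S^\bullet$ (acting on the right) consisting of right multiplications by elements of $S$ together with all constant maps on $S^\bullet$. For a pseudovariety $\mathbf{V}$, $\mathbf{V}^{\mathsf{bar}}=\llbracket T^{\mathsf{bar}}\mid T\in\mathbf{V}\rrbracket$. *)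

theory Defs
  imports Main
begin

type_synonym 'a sgr = "'a set \<times> ('a \<Rightarrow> 'a \<Rightarrow> 'a)"

definition is_sg :: "'a sgr \<Rightarrow> bool" where
  "is_sg S \<longleftrightarrow> fst S \<noteq> {} \<and>
     (\<forall>x\<in>fst S. \<forall>y\<in>fst S. snd S x y \<in> fst S) \<and>
     (\<forall>x\<in>fst S. \<forall>y\<in>fst S. \<forall>z\<in>fst S. snd S (snd S x y) z = snd S x (snd S y z))"

definition fin_sg :: "'a sgr \<Rightarrow> bool" where
  "fin_sg S \<longleftrightarrow> is_sg S \<and> finite (fst S)"

definition sg_hom :: "('a \<Rightarrow> 'b) \<Rightarrow> 'a sgr \<Rightarrow> 'b sgr \<Rightarrow> bool" where
  "sg_hom f S T \<longleftrightarrow> (\<forall>x\<in>fst S. f x \<in> fst T) \<and>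
     (\<forall>x\<in>fst S. \<forall>y\<in>fst S. f (snd S x y) = snd T (f x) (f y))"

definition divides :: "'b sgr \<Rightarrow> 'c sgr \<Rightarrow> bool" where
  "divides U V \<longleftrightarrow> (\<exists>W f. W \<subseteq> fst V \<and> is_sg (W, snd V) \<and>
       sg_hom f (W, snd V) U \<and> f ` W = fst U)"

text \<open>Direct product of a finite list of semigroups (empty list: trivial semigroup).\<close>
definition prod_sg :: "'c sgr list \<Rightarrow> (nat \<Rightarrow> 'c) sgr" where
  "prod_sg Ss = ({f. (\<forall>i<length Ss. f i \<in> fst (Ss ! i)) \<and> (\<forall>i\<ge>length Ss. f i = undefined)},
     (\<lambda>f g i. if i < length Ss then snd (Ss ! i) (f i) (g i) else undefined))"

text \<open>Membership of U in the pseudovariety generated by the class K.\<close>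
definition in_pv :: "'c sgr set \<Rightarrow> 'b sgr \<Rightarrow> bool" where
  "in_pv K U \<longleftrightarrow> fin_sg U \<and> (\<exists>Ss. set Ss \<subseteq> K \<and> divides U (prod_sg Ss))"

definition is_ideal :: "'a sgr \<Rightarrow> 'a set \<Rightarrow> bool" where
  "is_ideal S I \<longleftrightarrow> I \<noteq> {} \<and> I \<subseteq> fst S \<and>
     (\<forall>s\<in>fst S. \<forall>x\<in>I. snd S s x \<in> I \<and> snd S x s \<in> I)"

definition minimal_ideal :: "'a sgr \<Rightarrow> 'a set \<Rightarrow> bool" where
  "minimal_ideal S J \<longleftrightarrow> is_ideal S J \<and> (\<forall>I. is_ideal S I \<longrightarrow> J \<subseteq> I)"

definition right_zero :: "'a sgr \<Rightarrow> 'a \<Rightarrow> bool" where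
  "right_zero S z \<longleftrightarrow> z \<in> fst S \<and> (\<forall>s\<in>fst S. snd S s z = z)"

definition faithful_right :: "'a sgr \<Rightarrow> 'a set \<Rightarrow> bool" where
  "faithful_right S J \<longleftrightarrow> (\<forall>s\<in>fst S. \<forall>t\<in>fst S. (\<forall>j\<in>J. snd S j s = snd S j t) \<longrightarrow> s = t)"

definition is_monoid :: "'a sgr \<Rightarrow> bool" where
  "is_monoid S \<longleftrightarrow> (\<exists>e\<in>fst S. \<forall>x\<in>fst S. snd S e x = x \<and> snd S x e = x)"

text \<open>Carrier of S^bullet: S itself if S is a monoid, else S with a new identity None.\<close>
definition dot_carrier :: "'a sgr \<Rightarrow> 'a option set" where
  "dot_carrier S = (if is_monoid S then Some ` fst S else insert None (Some ` fst S))"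

definition rmul :: "'a sgr \<Rightarrow> 'a \<Rightarrow> 'a option \<Rightarrow> 'a option" where
  "rmul S s = (\<lambda>x. if x \<in> dot_carrier S then
       (case x of None \<Rightarrow> Some s | Some y \<Rightarrow> Some (snd S y s)) else None)"

definition cmap :: "'a sgr \<Rightarrow> 'a option \<Rightarrow> 'a option \<Rightarrow> 'a option" where
  "cmap S c = (\<lambda>x. if x \<in> dot_carrier S then c else None)"

text \<open>S^bar: transformations of S^bullet acting on the right (so f\<cdot>g = g \<circ> f).\<close>
definition bar :: "'a sgr \<Rightarrow> ('a option \<Rightarrow> 'a option) sgr" where
  "bar S = (rmul S ` fst S \<union> cmap S ` dot_carrier S,
     (\<lambda>f g x. if x \<in> dot_carrier S then g (f x) else None))"

end

(*
  For every T, right multiplications embed T into T^bar, so [S] is contained in [S]^bar.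
  Conversely, the hypotheses pass from S to its powers S^n, with J^n in place of J, and
  division T | R lifts to T^bar | R^bar.  So it suffices to embed S^bar into the power S^J:
  send the right multiplication by s to the constant tuple s and the constant map with value c
  to (j c) for j in J.  Since J consists of right zeros, this is a homomorphism, and faithfulness
  of the action on J makes it injective.
*)
theory Submission
  imports Defs "HOL-Library.FuncSet"
begin

section \<open>Division\<close>

lemma is_sg_nonempty: "is_sg S \<Longrightarrow> fst S \<noteq> {}"
  and is_sg_closed: "is_sg S \<Longrightarrow> x \<in> fst S \<Longrightarrow> y \<in> fst S \<Longrightarrow> snd S x y \<in> fst S"
  and is_sg_assoc: "is_sg S \<Longrightarrow> x \<in> fst S \<Longrightarrow> y \<in> fst S \<Longrightarrow> z \<in> fst S \<Longrightarrow>
    snd S (snd S x y) z = snd S x (snd S y z)"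
  unfolding is_sg_def by blast+

lemma is_sg_subI:
  assumes "is_sg S" "W \<subseteq> fst S" "W \<noteq> {}" "\<And>x y. x \<in> W \<Longrightarrow> y \<in> W \<Longrightarrow> snd S x y \<in> W"
  shows "is_sg (W, snd S)"
  using assms unfolding is_sg_def by (simp add: subset_iff)

lemma sg_hom_closed: "sg_hom f S T \<Longrightarrow> x \<in> fst S \<Longrightarrow> f x \<in> fst T"
  and sg_hom_mult: "sg_hom f S T \<Longrightarrow> x \<in> fst S \<Longrightarrow> y \<in> fst S \<Longrightarrow> f (snd S x y) = snd T (f x) (f y)"
  unfolding sg_hom_def by blast+

lemma sg_hom_restrict: "sg_hom f S T \<Longrightarrow> W \<subseteq> fst S \<Longrightarrow> sg_hom f (W, snd S) T"
  unfolding sg_hom_def by auto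

lemma is_sg_surj_hom_image:
  assumes S: "is_sg S" and f: "sg_hom f S T" and onto: "f ` fst S = fst T"
  shows "is_sg T"
  unfolding is_sg_def
proof (intro conjI ballI)
  show "fst T \<noteq> {}" using is_sg_nonempty[OF S] onto by blast
next
  fix a b assume "a \<in> fst T" "b \<in> fst T"
  then obtain x y where "x \<in> fst S" "y \<in> fst S" "a = f x" "b = f y" using onto by blast
  then show "snd T a b \<in> fst T"
    using is_sg_closed[OF S] sg_hom_closed[OF f] sg_hom_mult[OF f] by metis
next
  fix a b c assume "a \<in> fst T" "b \<in> fst T" "c \<in> fst T"
  then obtain x y z where "x \<in> fst S" "y \<in> fst S" "z \<in> fst S" "a = f x" "b = f y" "c = f z"
    using onto by blast
  then show "snd T (snd T a b) c = snd T a (snd T b c)"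
    using is_sg_assoc[OF S] is_sg_closed[OF S] sg_hom_mult[OF f] by metis
qed

lemma dividesI: "W \<subseteq> fst V \<Longrightarrow> is_sg (W, snd V) \<Longrightarrow> sg_hom f (W, snd V) U \<Longrightarrow> f ` W = fst U \<Longrightarrow>
    divides U V"
  unfolding divides_def by blast

lemma divides_of_surj_hom:
  assumes "is_sg S" "sg_hom f S T" "f ` fst S = fst T"
  shows "divides T S"
  using dividesI[of "fst S" S f T] assms by simp

text \<open>The image of \<open>\<alpha>\<close> is a subsemigroup of \<open>B\<close>, and the kernel condition lets \<open>\<beta>\<close> factor
  through it.\<close>
lemma divides_of_span:
  assumes C: "is_sg C" and B: "is_sg B" and \<alpha>: "sg_hom \<alpha> C B"
    and \<beta>: "sg_hom \<beta> C A" and onto: "\<beta> ` fst C = fst A"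
    and ker: "\<And>x y. x \<in> fst C \<Longrightarrow> y \<in> fst C \<Longrightarrow> \<alpha> x = \<alpha> y \<Longrightarrow> \<beta> x = \<beta> y"
  shows "divides A B"
proof -
  define f where "f = \<beta> \<circ> inv_into (fst C) \<alpha>"
  have f_\<alpha>: "f (\<alpha> x) = \<beta> x" if "x \<in> fst C" for x
  proof -
    have x: "\<alpha> x \<in> \<alpha> ` fst C" using that by blast
    show ?thesis
      using ker[OF inv_into_into[OF x] that f_inv_into_f[OF x]] by (simp add: f_def)
  qed
  have W: "\<alpha> ` fst C \<subseteq> fst B" using sg_hom_closed[OF \<alpha>] by blast
  show ?thesis
  proof (rule dividesI[OF W])
    show "is_sg (\<alpha> ` fst C, snd B)"
      by (rule is_sg_subI[OF B W]) (auto simp: is_sg_nonempty[OF C] is_sg_closed[OF C]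
          simp flip: sg_hom_mult[OF \<alpha>])
    show "sg_hom f (\<alpha> ` fst C, snd B) A"
      unfolding sg_hom_def using \<beta> onto
      by (auto simp: f_\<alpha> is_sg_closed[OF C] sg_hom_mult[OF \<beta>] simp flip: sg_hom_mult[OF \<alpha>])
    show "f ` \<alpha> ` fst C = fst A" using onto by (simp add: image_image f_\<alpha> cong: image_cong)
  qed
qed


lemma divides_of_inj_hom:
  "is_sg S \<Longrightarrow> is_sg T \<Longrightarrow> sg_hom f S T \<Longrightarrow> inj_on f (fst S) \<Longrightarrow> divides S T"
  by (rule divides_of_span[where \<beta> = id]) (auto simp: sg_hom_def inj_on_def)

lemma divides_trans:
  assumes AB: "divides A B" and BC: "divides B C" and C: "is_sg C"
  shows "divides A C"
proof -
  obtain W1 f1 where W1: "W1 \<subseteq> fst B" "is_sg (W1, snd B)" "sg_hom f1 (W1, snd B) A" "f1 ` W1 = fst A"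
    using AB unfolding divides_def by blast
  obtain W2 f2 where W2: "W2 \<subseteq> fst C" "is_sg (W2, snd C)" "sg_hom f2 (W2, snd C) B" "f2 ` W2 = fst B"
    using BC unfolding divides_def by blast
  define D where "D = {x \<in> W2. f2 x \<in> W1}"
  have "D \<subseteq> fst C" using W2(1) by (auto simp: D_def)
  moreover have "is_sg (D, snd C)"
  proof (rule is_sg_subI[OF C \<open>D \<subseteq> fst C\<close>])
    show "D \<noteq> {}" using is_sg_nonempty[OF W1(2)] W1(1) W2(4) by (force simp: D_def)
    show "snd C x y \<in> D" if "x \<in> D" "y \<in> D" for x y
      using that is_sg_closed[OF W1(2)] is_sg_closed[OF W2(2)] sg_hom_mult[OF W2(3)]
      by (auto simp: D_def)
  qed
  moreover have "sg_hom (f1 \<circ> f2) (D, snd C) A"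
    using W1(3) W2(3) by (auto simp: sg_hom_def D_def)
  moreover have "(f1 \<circ> f2) ` D = fst A"
  proof
    show "(f1 \<circ> f2) ` D \<subseteq> fst A" using W1(4) by (auto simp: D_def)
    show "fst A \<subseteq> (f1 \<circ> f2) ` D"
    proof
      fix a assume "a \<in> fst A"
      then obtain b where "b \<in> W1" "a = f1 b" using W1(4) by blast
      moreover obtain c where "c \<in> W2" "b = f2 c" using W1(1) W2(4) \<open>b \<in> W1\<close> by blast
      ultimately show "a \<in> (f1 \<circ> f2) ` D" by (auto simp: D_def)
    qed
  qed
  ultimately show ?thesis by (rule dividesI)
qed

section \<open>Direct products and powers\<close>

lemma fst_prod_sg:
  "fst (prod_sg Ss) = {f. (\<forall>i<length Ss. f i \<in> fst (Ss ! i)) \<and> (\<forall>i\<ge>length Ss. f i = undefined)}"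
  and snd_prod_sg:
  "snd (prod_sg Ss) f g = (\<lambda>i. if i < length Ss then snd (Ss ! i) (f i) (g i) else undefined)"
  by (simp_all add: prod_sg_def)

lemma is_sg_prod_sg:
  assumes "\<And>i. i < length Ss \<Longrightarrow> is_sg (Ss ! i)"
  shows "is_sg (prod_sg Ss)"
  unfolding is_sg_def
proof (intro conjI)
  define F where "F i = (if i < length Ss then SOME x. x \<in> fst (Ss ! i) else undefined)" for i
  have "F \<in> fst (prod_sg Ss)"
    using is_sg_nonempty[OF assms] by (auto simp: fst_prod_sg F_def some_in_eq)
  then show "fst (prod_sg Ss) \<noteq> {}" by blast
  show "\<forall>x\<in>fst (prod_sg Ss). \<forall>y\<in>fst (prod_sg Ss). snd (prod_sg Ss) x y \<in> fst (prod_sg Ss)"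
    using is_sg_closed[OF assms] by (simp add: fst_prod_sg snd_prod_sg)
  show "\<forall>x\<in>fst (prod_sg Ss). \<forall>y\<in>fst (prod_sg Ss). \<forall>z\<in>fst (prod_sg Ss).
      snd (prod_sg Ss) (snd (prod_sg Ss) x y) z = snd (prod_sg Ss) x (snd (prod_sg Ss) y z)"
    using is_sg_assoc[OF assms] by (auto simp: fst_prod_sg snd_prod_sg)
qed

lemma surj_hom_prod_sg:
  assumes len: "length Cs = length As"
    and f: "\<And>i. i < length As \<Longrightarrow> sg_hom (f i) (Cs ! i) (As ! i)"
    and onto: "\<And>i. i < length As \<Longrightarrow> f i ` fst (Cs ! i) = fst (As ! i)"
  defines "g \<equiv> \<lambda>F i. if i < length As then f i (F i) else undefined"
  shows "sg_hom g (prod_sg Cs) (prod_sg As)" and "g ` fst (prod_sg Cs) = fst (prod_sg As)"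
proof -
  show "sg_hom g (prod_sg Cs) (prod_sg As)"
    using sg_hom_closed[OF f] sg_hom_mult[OF f] len
    by (auto simp: sg_hom_def g_def fst_prod_sg snd_prod_sg)
  show "g ` fst (prod_sg Cs) = fst (prod_sg As)"
  proof
    show "g ` fst (prod_sg Cs) \<subseteq> fst (prod_sg As)"
      using sg_hom_closed[OF f] len unfolding g_def fst_prod_sg by auto
    show "fst (prod_sg As) \<subseteq> g ` fst (prod_sg Cs)"
    proof
      fix G assume G: "G \<in> fst (prod_sg As)"
      have "\<forall>i<length As. \<exists>x \<in> fst (Cs ! i). f i x = G i"
        using G onto unfolding fst_prod_sg by (metis (no_types, lifting) imageE mem_Collect_eq)
      then obtain F0 where F0: "\<And>i. i < length As \<Longrightarrow> F0 i \<in> fst (Cs ! i) \<and> f i (F0 i) = G i"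
        by metis
      define F where "F i = (if i < length As then F0 i else undefined)" for i
      have "F \<in> fst (prod_sg Cs)" using F0 len unfolding fst_prod_sg F_def by auto
      moreover have "g F = G" using F0 G unfolding g_def F_def fst_prod_sg by auto
      ultimately show "G \<in> g ` fst (prod_sg Cs)" by blast
    qed
  qed
qed

lemma divides_prod_sg:
  assumes len: "length As = length Bs"
    and dvd: "\<And>i. i < length As \<Longrightarrow> divides (As ! i) (Bs ! i)"
    and sg: "\<And>i. i < length Bs \<Longrightarrow> is_sg (Bs ! i)"
  shows "divides (prod_sg As) (prod_sg Bs)"
proof -
  have "\<forall>i<length As. \<exists>W f. W \<subseteq> fst (Bs ! i) \<and> is_sg (W, snd (Bs ! i)) \<and>
      sg_hom f (W, snd (Bs ! i)) (As ! i) \<and> f ` W = fst (As ! i)"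
    using dvd by (simp add: divides_def)
  then obtain W f where W: "\<And>i. i < length As \<Longrightarrow> W i \<subseteq> fst (Bs ! i)"
    and W_sg: "\<And>i. i < length As \<Longrightarrow> is_sg (W i, snd (Bs ! i))"
    and f: "\<And>i. i < length As \<Longrightarrow> sg_hom (f i) (W i, snd (Bs ! i)) (As ! i)"
    and f_onto: "\<And>i. i < length As \<Longrightarrow> f i ` W i = fst (As ! i)"
    by metis
  define Cs where "Cs = map (\<lambda>i. (W i, snd (Bs ! i))) [0..<length As]"
  have Cs: "length Cs = length As" "\<And>i. i < length As \<Longrightarrow> Cs ! i = (W i, snd (Bs ! i))"
    by (simp_all add: Cs_def)
  have sub: "fst (prod_sg Cs) \<subseteq> fst (prod_sg Bs)" using W len by (auto simp: fst_prod_sg Cs)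
  have "snd (prod_sg Cs) F G = snd (prod_sg Bs) F G" for F G
    unfolding snd_prod_sg Cs(1) using Cs(2) len by auto
  then have eq: "(fst (prod_sg Cs), snd (prod_sg Bs)) = prod_sg Cs" by (simp add: prod_eq_iff fun_eq_iff)
  have "sg_hom (f i) (Cs ! i) (As ! i)" "f i ` fst (Cs ! i) = fst (As ! i)" if "i < length As" for i
    using f[OF that] f_onto[OF that] by (simp_all add: Cs(2)[OF that])
  note g = surj_hom_prod_sg[OF Cs(1) this]
  show ?thesis
  proof (rule dividesI[OF sub])
    show "is_sg (fst (prod_sg Cs), snd (prod_sg Bs))"
      unfolding eq by (rule is_sg_prod_sg) (simp add: Cs W_sg)
    show "sg_hom (\<lambda>F i. if i < length As then f i (F i) else undefined)
        (fst (prod_sg Cs), snd (prod_sg Bs)) (prod_sg As)"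
      unfolding eq by (rule g(1))
  qed (rule g(2))
qed

lemma divides_prod_sg_singleton:
  assumes "is_sg S"
  shows "divides S (prod_sg [S])"
proof (rule divides_of_inj_hom)
  define f where "f x = (\<lambda>i::nat. if i = 0 then x else undefined)" for x :: 'a
  show "is_sg (prod_sg [S])" using assms by (intro is_sg_prod_sg) auto
  show "sg_hom f S (prod_sg [S])" by (auto simp: sg_hom_def f_def fst_prod_sg snd_prod_sg)
  show "inj_on f (fst S)" by (rule inj_onI) (metis f_def)
qed fact

definition sg_power :: "'a sgr \<Rightarrow> nat \<Rightarrow> (nat \<Rightarrow> 'a) sgr" where
  "sg_power S n = prod_sg (replicate n S)"

lemma fst_sg_power: "fst (sg_power S n) = {f. (\<forall>i<n. f i \<in> fst S) \<and> (\<forall>i\<ge>n. f i = undefined)}"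
  and snd_sg_power: "snd (sg_power S n) f g = (\<lambda>i. if i < n then snd S (f i) (g i) else undefined)"
  by (auto simp: sg_power_def fst_prod_sg snd_prod_sg)

lemma is_sg_sg_power: "is_sg S \<Longrightarrow> is_sg (sg_power S n)"
  unfolding sg_power_def by (rule is_sg_prod_sg) simp

lemma finite_sg_power:
  assumes "finite (fst S)"
  shows "finite (fst (sg_power S n))"
proof -
  have "fst (sg_power S n) = {..<n} \<rightarrow>\<^sub>E fst S"
    by (auto simp: fst_sg_power PiE_def extensional_def)
  then show ?thesis using assms by (simp add: finite_PiE)
qed

lemma divides_sg_power_mono:
  assumes S: "is_sg S" and "m \<le> n"
  shows "divides (sg_power S m) (sg_power S n)"
proof (rule divides_of_surj_hom[OF is_sg_sg_power[OF S]])
  define p where "p F = (\<lambda>i. if i < m then F i else undefined)" for F :: "nat \<Rightarrow> 'a"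
  show "sg_hom p (sg_power S n) (sg_power S m)"
    using \<open>m \<le> n\<close> by (auto simp: sg_hom_def p_def fst_sg_power snd_sg_power)
  obtain s where s: "s \<in> fst S" using is_sg_nonempty[OF S] by blast
  show "p ` fst (sg_power S n) = fst (sg_power S m)"
  proof
    show "p ` fst (sg_power S n) \<subseteq> fst (sg_power S m)"
      using \<open>m \<le> n\<close> by (auto simp: p_def fst_sg_power)
    show "fst (sg_power S m) \<subseteq> p ` fst (sg_power S n)"
    proof
      fix G assume G: "G \<in> fst (sg_power S m)"
      define F where "F i = (if i < m then G i else if i < n then s else undefined)" for i
      have "F \<in> fst (sg_power S n)" using G s \<open>m \<le> n\<close> by (auto simp: F_def fst_sg_power)
      moreover have "p F = G" using G by (auto simp: p_def F_def fst_sg_power)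
      ultimately show "G \<in> p ` fst (sg_power S n)" by blast
    qed
  qed
qed

text \<open>Block \<open>i\<close>, entry \<open>j\<close> of a \<open>k\<close>-tuple of \<open>m\<close>-tuples becomes entry \<open>i * m + j\<close>.\<close>
lemma divides_sg_power_sg_power:
  assumes S: "is_sg S"
  shows "divides (sg_power (sg_power S m) k) (sg_power S (k * m))"
proof (rule divides_of_inj_hom)
  define f where "f F = (\<lambda>j. if j < k * m then F (j div m) (j mod m) else undefined)"
    for F :: "nat \<Rightarrow> nat \<Rightarrow> 'a"
  have div_less: "j div m < k" and mod_less: "j mod m < m" if "j < k * m" for j
  proof -
    have "0 < m" using that by (cases m) auto
    then show "j div m < k" "j mod m < m" using that by (simp_all add: less_mult_imp_div_less)
  qed
  show "is_sg (sg_power (sg_power S m) k)" "is_sg (sg_power S (k * m))"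
    using S by (simp_all add: is_sg_sg_power)
  show "sg_hom f (sg_power (sg_power S m) k) (sg_power S (k * m))"
    unfolding sg_hom_def
  proof (intro conjI ballI)
    fix F assume F: "F \<in> fst (sg_power (sg_power S m) k)"
    have "F (j div m) (j mod m) \<in> fst S" if "j < k * m" for j
      using F div_less[OF that] mod_less[OF that] by (simp add: fst_sg_power)
    then show "f F \<in> fst (sg_power S (k * m))" by (simp add: f_def fst_sg_power)
  next
    fix F G
    show "f (snd (sg_power (sg_power S m) k) F G) = snd (sg_power S (k * m)) (f F) (f G)"
      using div_less mod_less by (simp add: f_def snd_sg_power fun_eq_iff)
  qed
  show "inj_on f (fst (sg_power (sg_power S m) k))"
  proof (rule inj_onI)
    fix F G assume F: "F \<in> fst (sg_power (sg_power S m) k)" and G: "G \<in> fst (sg_power (sg_power S m) k)"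
      and eq: "f F = f G"
    have "F i j = G i j" for i j
    proof (cases "i < k \<and> j < m")
      case True
      have "i * m + j < Suc i * m" using True by simp
      also have "\<dots> \<le> k * m" using True by (intro mult_le_mono1) simp
      moreover have "(i * m + j) div m = i" "(i * m + j) mod m = j" using True by auto
      ultimately show ?thesis using fun_cong[OF eq, of "i * m + j"] by (simp add: f_def)
    qed (use F G in \<open>cases "i < k"; auto simp: fst_sg_power\<close>)
    then show "F = G" by blast
  qed
qed

lemma prod_sg_divides_sg_power:
  assumes S: "is_sg S" and dvd: "\<And>i. i < length Ss \<Longrightarrow> \<exists>m. divides (Ss ! i) (sg_power S m)"
  shows "\<exists>m. divides (prod_sg Ss) (sg_power S m)"
proof -
  define k where "k = length Ss"
  obtain m where m: "\<And>i. i < k \<Longrightarrow> divides (Ss ! i) (sg_power S (m i))"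
    using dvd unfolding k_def by metis
  define M where "M = (\<Sum>i<k. m i)"
  have "divides (Ss ! i) (sg_power S M)" if "i < k" for i
  proof -
    have "m i \<le> M" using that by (auto simp: M_def intro: member_le_sum)
    then show ?thesis
      using divides_trans[OF m[OF that] divides_sg_power_mono[OF S] is_sg_sg_power[OF S]] by blast
  qed
  then have "divides (prod_sg Ss) (sg_power (sg_power S M) k)"
    unfolding sg_power_def[of "sg_power S M"]
    by (intro divides_prod_sg) (simp_all add: k_def is_sg_sg_power S)
  then have "divides (prod_sg Ss) (sg_power S (k * M))"
    by (rule divides_trans[OF _ divides_sg_power_sg_power[OF S] is_sg_sg_power[OF S]])
  then show ?thesis by blast
qed

lemma in_pv_singleton_iff: "in_pv {S} U \<longleftrightarrow> fin_sg U \<and> (\<exists>n. divides U (sg_power S n))"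
proof -
  have "set Ss \<subseteq> {S} \<longleftrightarrow> Ss = replicate (length Ss) S" for Ss :: "'a sgr list"
    by (metis in_set_replicate replicate_length_same singleton_iff subset_iff)
  then show ?thesis unfolding in_pv_def sg_power_def by (metis length_replicate)
qed

section \<open>The transformation semigroup \<open>bar R\<close>\<close>

definition dot_one :: "'a sgr \<Rightarrow> 'a option" where
  "dot_one R = (if is_monoid R
     then Some (SOME e. e \<in> fst R \<and> (\<forall>x\<in>fst R. snd R e x = x \<and> snd R x e = x)) else None)"

definition dot_mult :: "'a sgr \<Rightarrow> 'a option \<Rightarrow> 'a \<Rightarrow> 'a option" where
  "dot_mult R c t = (case c of None \<Rightarrow> Some t | Some y \<Rightarrow> Some (snd R y t))"

lemma dot_mult_simps [simp]:
  "dot_mult R None t = Some t" "dot_mult R (Some y) t = Some (snd R y t)"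
  by (simp_all add: dot_mult_def)

lemma Some_in_dot_carrier [simp]: "Some t \<in> dot_carrier R \<longleftrightarrow> t \<in> fst R"
  and None_in_dot_carrier [simp]: "None \<in> dot_carrier R \<longleftrightarrow> \<not> is_monoid R"
  by (auto simp: dot_carrier_def)

lemma dot_one_SomeD:
  assumes "dot_one R = Some e"
  shows "e \<in> fst R" and "\<And>x. x \<in> fst R \<Longrightarrow> snd R e x = x \<and> snd R x e = x"
proof -
  have "is_monoid R" using assms by (auto simp: dot_one_def split: if_splits)
  then have "\<exists>e. e \<in> fst R \<and> (\<forall>x\<in>fst R. snd R e x = x \<and> snd R x e = x)"
    by (auto simp: is_monoid_def)
  from someI_ex[OF this] assms \<open>is_monoid R\<close>
  show "e \<in> fst R" and "\<And>x. x \<in> fst R \<Longrightarrow> snd R e x = x \<and> snd R x e = x"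
    by (auto simp: dot_one_def)
qed

lemma dot_one_in_dot_carrier [simp]: "dot_one R \<in> dot_carrier R"
proof (cases "dot_one R")
  case None
  then show ?thesis by (simp add: dot_one_def split: if_splits)
qed (simp add: dot_one_SomeD)

lemma dot_mult_dot_one [simp]: "t \<in> fst R \<Longrightarrow> dot_mult R (dot_one R) t = Some t"
  by (cases "dot_one R") (auto dest: dot_one_SomeD simp: dot_mult_def)

lemma dot_mult_in_dot_carrier:
  "is_sg R \<Longrightarrow> c \<in> dot_carrier R \<Longrightarrow> t \<in> fst R \<Longrightarrow> dot_mult R c t \<in> dot_carrier R"
  by (cases c) (auto simp: dot_mult_def is_sg_closed)

lemma dot_mult_assoc:
  "is_sg R \<Longrightarrow> c \<in> dot_carrier R \<Longrightarrow> s \<in> fst R \<Longrightarrow> t \<in> fst R \<Longrightarrow>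
    dot_mult R (dot_mult R c s) t = dot_mult R c (snd R s t)"
  by (cases c) (auto simp: dot_mult_def is_sg_assoc)

lemma rmul_eq: "rmul R s x = (if x \<in> dot_carrier R then dot_mult R x s else None)"
  by (cases x) (simp_all add: rmul_def dot_mult_def)

lemma fst_bar: "fst (bar R) = rmul R ` fst R \<union> cmap R ` dot_carrier R"
  and snd_bar: "snd (bar R) f g = (\<lambda>x. if x \<in> dot_carrier R then g (f x) else None)"
  by (simp_all add: bar_def)

lemma bar_mult_rmul_rmul:
  "is_sg R \<Longrightarrow> s \<in> fst R \<Longrightarrow> t \<in> fst R \<Longrightarrow> snd (bar R) (rmul R s) (rmul R t) = rmul R (snd R s t)"
  by (auto simp: snd_bar rmul_eq fun_eq_iff dot_mult_in_dot_carrier dot_mult_assoc)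

lemma bar_mult_rmul_cmap:
  "is_sg R \<Longrightarrow> s \<in> fst R \<Longrightarrow> snd (bar R) (rmul R s) (cmap R c) = cmap R c"
  by (auto simp: snd_bar rmul_eq cmap_def fun_eq_iff dot_mult_in_dot_carrier)

lemma bar_mult_cmap_rmul:
  "c \<in> dot_carrier R \<Longrightarrow> snd (bar R) (cmap R c) (rmul R t) = cmap R (dot_mult R c t)"
  by (auto simp: snd_bar rmul_eq cmap_def fun_eq_iff)

lemma bar_mult_cmap_cmap: "c \<in> dot_carrier R \<Longrightarrow> snd (bar R) (cmap R c) (cmap R d) = cmap R d"
  by (auto simp: snd_bar cmap_def fun_eq_iff)

lemma rmul_dot_one: "s \<in> fst R \<Longrightarrow> rmul R s (dot_one R) = Some s"
  by (simp add: rmul_eq)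

lemma inj_on_rmul: "inj_on (rmul R) (fst R)"
  by (rule inj_onI) (metis rmul_dot_one option.inject)

lemma cmap_inject: "cmap R c = cmap R d \<longleftrightarrow> c = d"
  by (metis cmap_def dot_one_in_dot_carrier)

lemma rmul_eq_cmap_iff:
  assumes "s \<in> fst R"
  shows "rmul R s = cmap R c \<longleftrightarrow> c = Some s \<and> right_zero R s"
proof
  assume eq: "rmul R s = cmap R c"
  have "c = Some s" using fun_cong[OF eq, of "dot_one R"] assms by (simp add: rmul_dot_one cmap_def)
  moreover have "snd R y s = s" if "y \<in> fst R" for y
    using fun_cong[OF eq, of "Some y"] \<open>c = Some s\<close> that by (simp add: rmul_eq cmap_def dot_mult_def)
  ultimately show "c = Some s \<and> right_zero R s" using assms by (simp add: right_zero_def)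
next
  assume "c = Some s \<and> right_zero R s"
  then show "rmul R s = cmap R c"
    by (auto simp: rmul_eq cmap_def fun_eq_iff dot_mult_def right_zero_def split: option.split)
qed

text \<open>A presentation of \<open>bar R\<close>: \<open>Inl s\<close> stands for the right multiplication by \<open>s\<close>,
  \<open>Inr c\<close> for the constant map with value \<open>c\<close>.  The multiplication needs no case distinction
  on right zeros, which \<open>bar_of_cover\<close> identifies with the constant maps.\<close>
definition bar_cover :: "'a sgr \<Rightarrow> ('a + 'a option) sgr" where
  "bar_cover R = (Inl ` fst R \<union> Inr ` dot_carrier R,
     \<lambda>a b. case b of
       Inr d \<Rightarrow> Inr d
     | Inl t \<Rightarrow> (case a of Inl s \<Rightarrow> Inl (snd R s t) | Inr c \<Rightarrow> Inr (dot_mult R c t)))"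

definition bar_of_cover :: "'a sgr \<Rightarrow> 'a + 'a option \<Rightarrow> 'a option \<Rightarrow> 'a option" where
  "bar_of_cover R = case_sum (rmul R) (cmap R)"

lemma fst_bar_cover: "fst (bar_cover R) = Inl ` fst R \<union> Inr ` dot_carrier R"
  by (simp add: bar_cover_def)

lemma bar_cover_mult [simp]:
  "snd (bar_cover R) (Inl s) (Inl t) = Inl (snd R s t)"
  "snd (bar_cover R) (Inr c) (Inl t) = Inr (dot_mult R c t)"
  "snd (bar_cover R) a (Inr d) = Inr d"
  by (simp_all add: bar_cover_def)

lemma bar_of_cover_simps [simp]:
  "bar_of_cover R (Inl s) = rmul R s" "bar_of_cover R (Inr c) = cmap R c"
  by (simp_all add: bar_of_cover_def)

lemma is_sg_bar_cover:
  assumes R: "is_sg R"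
  shows "is_sg (bar_cover R)"
  unfolding is_sg_def
proof (intro conjI ballI)
  show "fst (bar_cover R) \<noteq> {}" using dot_one_in_dot_carrier[of R] unfolding fst_bar_cover by blast
next
  fix a b assume "a \<in> fst (bar_cover R)" "b \<in> fst (bar_cover R)"
  then show "snd (bar_cover R) a b \<in> fst (bar_cover R)"
    by (auto simp: fst_bar_cover is_sg_closed[OF R] dot_mult_in_dot_carrier[OF R])
next
  fix a b c assume "a \<in> fst (bar_cover R)" "b \<in> fst (bar_cover R)" "c \<in> fst (bar_cover R)"
  then show "snd (bar_cover R) (snd (bar_cover R) a b) c = snd (bar_cover R) a (snd (bar_cover R) b c)"
    by (auto simp: fst_bar_cover is_sg_assoc[OF R] dot_mult_assoc[OF R])
qed

lemma sg_hom_bar_of_cover: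
  assumes R: "is_sg R"
  shows "sg_hom (bar_of_cover R) (bar_cover R) (bar R)"
  unfolding sg_hom_def
proof (intro conjI ballI)
  fix a assume "a \<in> fst (bar_cover R)"
  then show "bar_of_cover R a \<in> fst (bar R)" by (auto simp: fst_bar_cover fst_bar)
next
  fix a b assume "a \<in> fst (bar_cover R)" "b \<in> fst (bar_cover R)"
  then show "bar_of_cover R (snd (bar_cover R) a b) = snd (bar R) (bar_of_cover R a) (bar_of_cover R b)"
    by (auto simp: fst_bar_cover bar_mult_rmul_rmul[OF R] bar_mult_rmul_cmap[OF R]
        bar_mult_cmap_rmul bar_mult_cmap_cmap)
qed

lemma bar_of_cover_onto: "bar_of_cover R ` fst (bar_cover R) = fst (bar R)"
  by (auto simp: fst_bar_cover fst_bar image_Un image_image)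

lemma is_sg_bar: "is_sg R \<Longrightarrow> is_sg (bar R)"
  by (rule is_sg_surj_hom_image[OF is_sg_bar_cover sg_hom_bar_of_cover bar_of_cover_onto])

lemma divides_bar_self:
  assumes R: "is_sg R"
  shows "divides R (bar R)"
proof (rule divides_of_inj_hom[OF R is_sg_bar[OF R] _ inj_on_rmul])
  show "sg_hom (rmul R) R (bar R)"
    by (auto simp: sg_hom_def fst_bar bar_mult_rmul_rmul[OF R])
qed

section \<open>Division is inherited by \<open>bar\<close>\<close>

locale sg_division =
  fixes R :: "'a sgr" and T :: "'b sgr" and W :: "'a set" and \<phi> :: "'a \<Rightarrow> 'b"
  assumes is_sg_R: "is_sg R" and is_sg_T: "is_sg T"
    and W_sub: "W \<subseteq> fst R" and is_sg_W: "is_sg (W, snd R)"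
    and hom: "sg_hom \<phi> (W, snd R) T" and onto: "\<phi> ` W = fst T"
begin

lemma W_mem: "x \<in> W \<Longrightarrow> x \<in> fst R"
  using W_sub by blast

lemma W_closed: "x \<in> W \<Longrightarrow> y \<in> W \<Longrightarrow> snd R x y \<in> W"
  using is_sg_closed[OF is_sg_W] by simp

lemma \<phi>_closed: "x \<in> W \<Longrightarrow> \<phi> x \<in> fst T"
  using sg_hom_closed[OF hom] by simp

lemma \<phi>_mult: "x \<in> W \<Longrightarrow> y \<in> W \<Longrightarrow> \<phi> (snd R x y) = snd T (\<phi> x) (\<phi> y)"
  using sg_hom_mult[OF hom] by simp

lemma right_zero_\<phi>:
  assumes s: "s \<in> W" and "right_zero R s"
  shows "right_zero T (\<phi> s)"
  unfolding right_zero_def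
proof (intro conjI ballI)
  show "\<phi> s \<in> fst T" using s by (rule \<phi>_closed)
  fix y assume "y \<in> fst T"
  then obtain v where "v \<in> W" "y = \<phi> v" using onto by blast
  moreover have "snd R v s = s" using \<open>right_zero R s\<close> \<open>v \<in> W\<close> W_sub by (auto simp: right_zero_def)
  ultimately show "snd T y (\<phi> s) = \<phi> s" using s by (simp flip: \<phi>_mult)
qed

lemma is_monoid_if_dot_one_in:
  assumes "dot_one R = Some e" and "e \<in> W"
  shows "is_monoid T"
  unfolding is_monoid_def
proof
  show "\<phi> e \<in> fst T" using \<open>e \<in> W\<close> by (rule \<phi>_closed)
  show "\<forall>y\<in>fst T. snd T (\<phi> e) y = y \<and> snd T y (\<phi> e) = y"
  proof
    fix y assume "y \<in> fst T"
    then obtain v where "v \<in> W" "y = \<phi> v" using onto by blast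
    then show "snd T (\<phi> e) y = y \<and> snd T y (\<phi> e) = y"
      using dot_one_SomeD(2)[OF assms(1)] \<open>e \<in> W\<close> W_sub \<phi>_mult by (metis subsetD)
  qed
qed

text \<open>The part of \<open>bar_cover R\<close> lying over \<open>W\<close>, with \<open>dot_one R\<close> standing in for the
  adjoined identity of \<open>W\<close>.\<close>
definition cover :: "('a + 'a option) set" where
  "cover = Inl ` W \<union> Inr ` insert (dot_one R) (Some ` W)"

definition dot_lift :: "'a option \<Rightarrow> 'b option" where
  "dot_lift c = (if c \<in> Some ` W then Some (\<phi> (the c)) else dot_one T)"

definition lift :: "'a + 'a option \<Rightarrow> 'b option \<Rightarrow> 'b option" where
  "lift = case_sum (rmul T \<circ> \<phi>) (cmap T \<circ> dot_lift)"

lemma lift_simps [simp]: "lift (Inl s) = rmul T (\<phi> s)" "lift (Inr c) = cmap T (dot_lift c)"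
  by (simp_all add: lift_def)

lemma dot_lift_Some [simp]: "w \<in> W \<Longrightarrow> dot_lift (Some w) = Some (\<phi> w)"
  by (simp add: dot_lift_def)

lemma dot_lift_in_dot_carrier: "dot_lift c \<in> dot_carrier T"
proof (cases "c \<in> Some ` W")
  case True
  then show ?thesis by (auto simp: \<phi>_closed)
qed (simp add: dot_lift_def)

lemma dot_lift_dot_mult:
  assumes c: "c \<in> insert (dot_one R) (Some ` W)" and t: "t \<in> W"
  shows "dot_lift (dot_mult R c t) = dot_mult T (dot_lift c) (\<phi> t)"
proof (cases "c \<in> Some ` W")
  case True
  then obtain w where "w \<in> W" "c = Some w" by blast
  then show ?thesis using t by (simp add: W_closed \<phi>_mult)
next
  case False
  then have "c = dot_one R" using c by blast
  moreover have "t \<in> fst R" using t W_sub by blast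
  ultimately show ?thesis using False t by (simp add: dot_lift_def \<phi>_closed)
qed

lemma cover_sub: "cover \<subseteq> fst (bar_cover R)"
  using W_sub by (auto simp: cover_def fst_bar_cover)

lemma is_sg_cover: "is_sg (cover, snd (bar_cover R))"
proof (rule is_sg_subI[OF is_sg_bar_cover[OF is_sg_R] cover_sub])
  show "cover \<noteq> {}" by (simp add: cover_def)
  show "snd (bar_cover R) a b \<in> cover" if "a \<in> cover" "b \<in> cover" for a b
    using that by (auto simp: cover_def W_closed W_mem)
qed

lemma sg_hom_lift: "sg_hom lift (cover, snd (bar_cover R)) (bar T)"
  unfolding sg_hom_def fst_conv snd_conv
proof (intro conjI ballI)
  fix a assume "a \<in> cover"
  then show "lift a \<in> fst (bar T)"
    using dot_lift_in_dot_carrier by (auto simp: cover_def fst_bar \<phi>_closed)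
next
  fix a b assume a: "a \<in> cover" and b: "b \<in> cover"
  show "lift (snd (bar_cover R) a b) = snd (bar T) (lift a) (lift b)"
  proof (cases a; cases b)
    fix s t assume "a = Inl s" "b = Inl t"
    then show ?thesis using a b
      by (auto simp: cover_def bar_mult_rmul_rmul[OF is_sg_T] \<phi>_closed \<phi>_mult)
  next
    fix s d assume "a = Inl s" "b = Inr d"
    then show ?thesis using a by (auto simp: cover_def bar_mult_rmul_cmap[OF is_sg_T] \<phi>_closed)
  next
    fix c t assume "a = Inr c" "b = Inl t"
    then show ?thesis using a b dot_lift_in_dot_carrier
      by (auto simp: cover_def bar_mult_cmap_rmul dot_lift_dot_mult W_closed \<phi>_mult)
  next
    fix c d assume "a = Inr c" "b = Inr d"
    then show ?thesis using a dot_lift_in_dot_carrier by (auto simp: cover_def bar_mult_cmap_cmap)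
  qed
qed

lemma lift_onto: "lift ` cover = fst (bar T)"
proof
  show "lift ` cover \<subseteq> fst (bar T)"
    using sg_hom_closed[OF sg_hom_lift] by auto
  show "fst (bar T) \<subseteq> lift ` cover"
  proof
    fix f assume "f \<in> fst (bar T)"
    then consider (rmul) t where "t \<in> fst T" "f = rmul T t"
      | (const) c where "c \<in> dot_carrier T" "f = cmap T c"
      by (auto simp: fst_bar)
    then show "f \<in> lift ` cover"
    proof cases
      case rmul
      then obtain w where "w \<in> W" "t = \<phi> w" using onto by blast
      then have "f = lift (Inl w)" using rmul by simp
      then show ?thesis using \<open>w \<in> W\<close> unfolding cover_def by blast
    next
      case const
      show ?thesis
      proof (cases c)
        case None
        then have "\<not> is_monoid T" using const by simp
        then have "dot_one R \<notin> Some ` W" using is_monoid_if_dot_one_in by blast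
        then have "f = lift (Inr (dot_one R))"
          using const \<open>\<not> is_monoid T\<close> None by (simp add: dot_lift_def dot_one_def)
        then show ?thesis unfolding cover_def by blast
      next
        case (Some y)
        then obtain w where "w \<in> W" "y = \<phi> w" using const onto by auto
        then have "f = lift (Inr (Some w))" using const Some by simp
        then show ?thesis using \<open>w \<in> W\<close> unfolding cover_def by blast
      qed
    qed
  qed
qed

lemma lift_Inl_eq_Inr:
  assumes s: "s \<in> W" and eq: "rmul R s = cmap R d"
  shows "lift (Inl s) = lift (Inr d)"
proof -
  have "d = Some s" and "right_zero R s" using eq rmul_eq_cmap_iff[OF W_mem[OF s]] by simp_all
  then show ?thesis
    using rmul_eq_cmap_iff[OF \<phi>_closed[OF s]] right_zero_\<phi>[OF s] s by simp
qed

lemma lift_kernel: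
  assumes a: "a \<in> cover" and b: "b \<in> cover" and eq: "bar_of_cover R a = bar_of_cover R b"
  shows "lift a = lift b"
proof (cases a; cases b)
  fix s t assume "a = Inl s" "b = Inl t"
  then show ?thesis using a b eq W_sub inj_on_rmul[of R] by (auto simp: cover_def inj_on_def)
next
  fix s d assume "a = Inl s" "b = Inr d"
  then show ?thesis using a eq lift_Inl_eq_Inr by (auto simp: cover_def)
next
  fix c t assume "a = Inr c" "b = Inl t"
  then show ?thesis using b eq lift_Inl_eq_Inr[of t c] by (auto simp: cover_def)
next
  fix c d assume "a = Inr c" "b = Inr d"
  then show ?thesis using eq by (simp add: cmap_inject)
qed

lemma divides_bar: "divides (bar T) (bar R)"
proof (rule divides_of_span[OF is_sg_cover is_sg_bar[OF is_sg_R]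
      sg_hom_restrict[OF sg_hom_bar_of_cover[OF is_sg_R] cover_sub] sg_hom_lift])
  show "lift ` fst (cover, snd (bar_cover R)) = fst (bar T)" by (simp add: lift_onto)
  show "lift a = lift b" if "a \<in> fst (cover, snd (bar_cover R))" "b \<in> fst (cover, snd (bar_cover R))"
    and "bar_of_cover R a = bar_of_cover R b" for a b
    using that by (intro lift_kernel) simp_all
qed

end

lemma divides_bar_bar:
  assumes "is_sg R" "is_sg T" "divides T R"
  shows "divides (bar T) (bar R)"
proof -
  obtain W \<phi> where "sg_division R T W \<phi>"
    using assms unfolding divides_def sg_division_def by blast
  then show ?thesis by (rule sg_division.divides_bar)
qed

section \<open>Embedding \<open>bar S\<close> into a power of \<open>S\<close>\<close>

definition mult_dot :: "'a sgr \<Rightarrow> 'a \<Rightarrow> 'a option \<Rightarrow> 'a" where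
  "mult_dot R s c = (case c of None \<Rightarrow> s | Some y \<Rightarrow> snd R s y)"

lemma mult_dot_simps [simp]: "mult_dot R s None = s" "mult_dot R s (Some y) = snd R s y"
  by (simp_all add: mult_dot_def)

locale faithful_right_zero_ideal =
  fixes S :: "'a sgr" and J :: "'a set"
  assumes is_sg: "is_sg S" and ideal: "is_ideal S J"
    and right_zeros: "\<And>z. z \<in> J \<Longrightarrow> right_zero S z" and faithful: "faithful_right S J"
begin

lemma J_mem: "j \<in> J \<Longrightarrow> j \<in> fst S"
  and J_nonempty: "J \<noteq> {}"
  and J_right_closed: "j \<in> J \<Longrightarrow> x \<in> fst S \<Longrightarrow> snd S j x \<in> J"
  using ideal by (auto simp: is_ideal_def)

lemma mult_right_zero: "j \<in> J \<Longrightarrow> x \<in> fst S \<Longrightarrow> snd S x j = j"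
  using right_zeros by (simp add: right_zero_def)

lemma faithfulD: "x \<in> fst S \<Longrightarrow> y \<in> fst S \<Longrightarrow> (\<And>j. j \<in> J \<Longrightarrow> snd S j x = snd S j y) \<Longrightarrow> x = y"
  using faithful by (auto simp: faithful_right_def)

lemma is_monoid_if_acts_trivially:
  assumes y: "y \<in> fst S" and triv: "\<And>j. j \<in> J \<Longrightarrow> snd S j y = j"
  shows "is_monoid S"
  unfolding is_monoid_def
proof (intro bexI[OF _ y] ballI conjI)
  fix x assume x: "x \<in> fst S"
  show "snd S y x = x"
    using is_sg_assoc[OF is_sg J_mem y x] triv
    by (intro faithfulD[OF is_sg_closed[OF is_sg y x] x]) simp
  show "snd S x y = x"
    using is_sg_assoc[OF is_sg J_mem x y] triv J_right_closed x
    by (intro faithfulD[OF is_sg_closed[OF is_sg x y] x]) simp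
qed

lemma mult_dot_in_J: "j \<in> J \<Longrightarrow> c \<in> dot_carrier S \<Longrightarrow> mult_dot S j c \<in> J"
  by (cases c) (simp_all add: J_right_closed)

lemma mult_dot_injective:
  assumes c: "c \<in> dot_carrier S" and d: "d \<in> dot_carrier S"
    and eq: "\<And>j. j \<in> J \<Longrightarrow> mult_dot S j c = mult_dot S j d"
  shows "c = d"
proof (cases c; cases d)
  fix y assume "c = None" "d = Some y"
  then show ?thesis using c d eq is_monoid_if_acts_trivially[of y] by force
next
  fix y assume "c = Some y" "d = None"
  then show ?thesis using c d eq is_monoid_if_acts_trivially[of y] by force
next
  fix x y assume "c = Some x" "d = Some y"
  then show ?thesis using c d eq faithfulD by force
qed simp

text \<open>The \<open>j\<close>-th coordinate of the embedding of \<open>bar S\<close> into \<open>S\<^sup>J\<close>: the right multiplication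
  by \<open>s\<close> goes to \<open>s\<close>, the constant map with value \<open>c\<close> to \<open>j c\<close>, which lies in \<open>J\<close> and hence
  absorbs all left factors, as a constant map does.\<close>
definition bar_coord :: "'a \<Rightarrow> 'a + 'a option \<Rightarrow> 'a" where
  "bar_coord j = case_sum id (mult_dot S j)"

lemma bar_coord_simps [simp]: "bar_coord j (Inl s) = s" "bar_coord j (Inr c) = mult_dot S j c"
  by (simp_all add: bar_coord_def)

lemma sg_hom_bar_coord:
  assumes j: "j \<in> J"
  shows "sg_hom (bar_coord j) (bar_cover S) S"
  unfolding sg_hom_def
proof (intro conjI ballI)
  fix a assume "a \<in> fst (bar_cover S)"
  then show "bar_coord j a \<in> fst S"
    using mult_dot_in_J[OF j] J_mem by (auto simp: fst_bar_cover)
next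
  fix a b assume a: "a \<in> fst (bar_cover S)" and b: "b \<in> fst (bar_cover S)"
  have mult_dot_assoc: "mult_dot S j (dot_mult S c t) = snd S (mult_dot S j c) t"
    if "c \<in> dot_carrier S" "t \<in> fst S" for c t
    using that is_sg_assoc[OF is_sg J_mem[OF j]] by (cases c) simp_all
  show "bar_coord j (snd (bar_cover S) a b) = snd S (bar_coord j a) (bar_coord j b)"
    using a b mult_dot_in_J[OF j] mult_right_zero J_mem
    by (auto simp: fst_bar_cover mult_dot_assoc)
qed

lemma rmul_eq_cmap_if_coords_eq:
  assumes s: "s \<in> fst S" and d: "d \<in> dot_carrier S" and eq: "\<And>j. j \<in> J \<Longrightarrow> s = mult_dot S j d"
  shows "rmul S s = cmap S d"
proof -
  obtain j0 where "j0 \<in> J" using J_nonempty by blast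
  then have "s \<in> J" using eq mult_dot_in_J[OF _ d] by metis
  have "mult_dot S j d = mult_dot S j (Some s)" if "j \<in> J" for j
    using eq[OF that] mult_right_zero[OF \<open>s \<in> J\<close> J_mem[OF that]] by simp
  then have "d = Some s" using mult_dot_injective[OF d] s by simp
  then show ?thesis using rmul_eq_cmap_iff[OF s] right_zeros[OF \<open>s \<in> J\<close>] by simp
qed

lemma bar_coord_kernel:
  assumes a: "a \<in> fst (bar_cover S)" and b: "b \<in> fst (bar_cover S)"
    and eq: "\<And>j. j \<in> J \<Longrightarrow> bar_coord j a = bar_coord j b"
  shows "bar_of_cover S a = bar_of_cover S b"
proof (cases a; cases b)
  fix s t assume "a = Inl s" "b = Inl t"
  then show ?thesis using eq J_nonempty by auto
next
  fix s d assume "a = Inl s" "b = Inr d"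
  then show ?thesis using a b eq rmul_eq_cmap_if_coords_eq by (auto simp: fst_bar_cover)
next
  fix c t assume "a = Inr c" "b = Inl t"
  then show ?thesis using a b eq rmul_eq_cmap_if_coords_eq[of t c] by (auto simp: fst_bar_cover)
next
  fix c d assume "a = Inr c" "b = Inr d"
  then show ?thesis using a b eq mult_dot_injective by (auto simp: fst_bar_cover)
qed

lemma divides_bar_sg_power:
  assumes "finite J"
  shows "divides (bar S) (sg_power S (card J))"
proof -
  define N where "N = card J"
  obtain e where e: "bij_betw e {0..<N} J" using ex_bij_betw_nat_finite[OF assms] N_def by blast
  define embed where "embed a = (\<lambda>i. if i < N then bar_coord (e i) a else undefined)" for a
  have e_J: "i < N \<Longrightarrow> e i \<in> J" for i using bij_betwE[OF e] by simp
  have "sg_hom embed (bar_cover S) (sg_power S N)"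
    using sg_hom_closed[OF sg_hom_bar_coord[OF e_J]] sg_hom_mult[OF sg_hom_bar_coord[OF e_J]]
    by (auto simp: sg_hom_def embed_def fst_sg_power snd_sg_power)
  moreover have "bar_of_cover S a = bar_of_cover S b"
    if "a \<in> fst (bar_cover S)" "b \<in> fst (bar_cover S)" "embed a = embed b" for a b
  proof (rule bar_coord_kernel[OF that(1,2)])
    fix j assume "j \<in> J"
    then obtain i where "i < N" "j = e i" using e by (auto simp: bij_betw_def)
    then show "bar_coord j a = bar_coord j b" using fun_cong[OF that(3), of i] by (simp add: embed_def)
  qed
  ultimately show ?thesis
    unfolding N_def[symmetric]
    by (intro divides_of_span[OF is_sg_bar_cover[OF is_sg] is_sg_sg_power[OF is_sg]
          _ sg_hom_bar_of_cover[OF is_sg] bar_of_cover_onto])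
qed

end

lemma (in faithful_right_zero_ideal) faithful_right_sg_power:
  "faithful_right (sg_power S n) (fst (sg_power (J, snd S) n))"
  unfolding faithful_right_def
proof (intro ballI impI)
  fix X Y assume X: "X \<in> fst (sg_power S n)" and Y: "Y \<in> fst (sg_power S n)"
    and eq: "\<forall>F\<in>fst (sg_power (J, snd S) n). snd (sg_power S n) F X = snd (sg_power S n) F Y"
  define const where "const j = (\<lambda>i. if i < n then j else undefined)" for j :: 'a
  have "X i = Y i" if "i < n" for i
  proof (rule faithfulD)
    show "X i \<in> fst S" "Y i \<in> fst S" using X Y that by (simp_all add: fst_sg_power)
    fix j assume "j \<in> J"
    then have "const j \<in> fst (sg_power (J, snd S) n)" by (simp add: fst_sg_power const_def)
    then show "snd S j (X i) = snd S j (Y i)"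
      using fun_cong[OF bspec[OF eq], of "const j" i] that by (simp add: snd_sg_power const_def)
  qed
  moreover have "X i = Y i" if "\<not> i < n" for i using X Y that by (simp add: fst_sg_power)
  ultimately show "X = Y" by blast
qed

lemma faithful_right_zero_ideal_sg_power:
  assumes "faithful_right_zero_ideal S J"
  shows "faithful_right_zero_ideal (sg_power S n) (fst (sg_power (J, snd S) n))"
proof -
  interpret faithful_right_zero_ideal S J by fact
  define JR where "JR = fst (sg_power (J, snd S) n)"
  have JR: "F \<in> JR \<longleftrightarrow> (\<forall>i<n. F i \<in> J) \<and> (\<forall>i\<ge>n. F i = undefined)" for F
    by (simp add: JR_def fst_sg_power)
  have right_zero_JR: "right_zero (sg_power S n) F" if "F \<in> JR" for F
    using that mult_right_zero J_mem by (auto simp: right_zero_def JR fst_sg_power snd_sg_power)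
  have "is_ideal (sg_power S n) JR"
    unfolding is_ideal_def
  proof (intro conjI ballI)
    obtain j where "j \<in> J" using J_nonempty by blast
    then have "(\<lambda>i. if i < n then j else undefined) \<in> JR" by (simp add: JR)
    then show "JR \<noteq> {}" by blast
    show "JR \<subseteq> fst (sg_power S n)" by (auto simp: JR fst_sg_power J_mem)
    fix X F assume X: "X \<in> fst (sg_power S n)" and F: "F \<in> JR"
    show "snd (sg_power S n) X F \<in> JR" using right_zero_JR[OF F] X F by (simp add: right_zero_def)
    show "snd (sg_power S n) F X \<in> JR"
      using X F J_right_closed by (simp add: JR fst_sg_power snd_sg_power)
  qed
  then show ?thesis
    unfolding JR_def faithful_right_zero_ideal_def
    using is_sg_sg_power[OF is_sg] right_zero_JR faithful_right_sg_power by (simp add: JR_def)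
qed

section \<open>The pseudovarieties\<close>

lemma bar_divides_sg_power_if_in_pv:
  assumes S: "fin_sg S" and J: "faithful_right_zero_ideal S J" and T: "in_pv {S} T"
  shows "\<exists>m. divides (bar T) (sg_power S m)"
proof -
  interpret faithful_right_zero_ideal S J by fact
  obtain n where "fin_sg T" and T_dvd: "divides T (sg_power S n)" using T in_pv_singleton_iff by blast
  define R where "R = sg_power S n"
  define JR where "JR = fst (sg_power (J, snd S) n)"
  interpret R: faithful_right_zero_ideal R JR
    unfolding R_def JR_def using J by (rule faithful_right_zero_ideal_sg_power)
  have "finite J" using S J_mem by (metis fin_sg_def finite_subset subsetI)
  then have "finite JR" by (simp add: JR_def finite_sg_power)
  have "divides (bar T) (bar R)"
    using divides_bar_bar[OF R.is_sg _ T_dvd[folded R_def]] \<open>fin_sg T\<close> by (simp add: fin_sg_def)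
  moreover have "divides (bar R) (sg_power R (card JR))"
    using R.divides_bar_sg_power[OF \<open>finite JR\<close>] .
  moreover have "divides (sg_power R (card JR)) (sg_power S (card JR * n))"
    unfolding R_def using divides_sg_power_sg_power[OF is_sg] .
  ultimately have "divides (bar T) (sg_power S (card JR * n))"
    by (meson divides_trans is_sg_sg_power R.is_sg is_sg)
  then show ?thesis by blast
qed

lemma ex_nat_copy:
  assumes U: "fin_sg U"
  shows "\<exists>U0 :: nat sgr. fin_sg U0 \<and> divides U U0 \<and> divides U0 U"
proof -
  have is_sg_U: "is_sg U" and "finite (fst U)" using U by (auto simp: fin_sg_def)
  then obtain h :: "'a \<Rightarrow> nat" where h: "bij_betw h (fst U) {0..<card (fst U)}"
    using ex_bij_betw_finite_nat by blast
  define g where "g = inv_into (fst U) h"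
  have g: "bij_betw g {0..<card (fst U)} (fst U)" using h by (simp add: g_def bij_betw_inv_into)
  have g_h: "x \<in> fst U \<Longrightarrow> g (h x) = x" for x using h by (simp add: g_def bij_betw_def)
  define U0 :: "nat sgr" where "U0 = ({0..<card (fst U)}, \<lambda>a b. h (snd U (g a) (g b)))"
  have h_hom: "sg_hom h U U0"
    using bij_betwE[OF h] is_sg_closed[OF is_sg_U] by (simp add: sg_hom_def U0_def g_h)
  have h_onto: "h ` fst U = fst U0" using h by (simp add: U0_def bij_betw_def)
  have is_sg_U0: "is_sg U0" by (rule is_sg_surj_hom_image[OF is_sg_U h_hom h_onto])
  have "sg_hom g U0 U"
    using bij_betwE[OF g] is_sg_closed[OF is_sg_U] by (simp add: sg_hom_def U0_def g_h)
  moreover have "g ` fst U0 = fst U" using g by (simp add: U0_def bij_betw_def)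
  ultimately have "divides U U0" by (rule divides_of_surj_hom[OF is_sg_U0])
  moreover have "divides U0 U" by (rule divides_of_surj_hom[OF is_sg_U h_hom h_onto])
  moreover have "fin_sg U0" using is_sg_U0 by (simp add: fin_sg_def U0_def)
  ultimately show ?thesis by blast
qed

lemma in_pv_if_in_pv_bars:
  assumes S: "fin_sg S" and J: "faithful_right_zero_ideal S J"
    and U: "in_pv (bar ` {T :: 'c sgr. in_pv {S} T}) U"
  shows "in_pv {S} U"
proof -
  have is_sg_S: "is_sg S" using S by (simp add: fin_sg_def)
  obtain Ss where "fin_sg U" and Ss: "set Ss \<subseteq> bar ` {T :: 'c sgr. in_pv {S} T}"
    and U_dvd: "divides U (prod_sg Ss)" using U by (auto simp: in_pv_def)
  have "\<exists>m. divides (Ss ! i) (sg_power S m)" if i: "i < length Ss" for i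
  proof -
    obtain T :: "'c sgr" where "in_pv {S} T" "Ss ! i = bar T" using Ss nth_mem[OF i] by blast
    then show ?thesis using bar_divides_sg_power_if_in_pv[OF S J] by simp
  qed
  then obtain m where "divides (prod_sg Ss) (sg_power S m)"
    using prod_sg_divides_sg_power[OF is_sg_S] by blast
  then show ?thesis
    using \<open>fin_sg U\<close> divides_trans[OF U_dvd _ is_sg_sg_power[OF is_sg_S]] in_pv_singleton_iff by blast
qed

lemma in_pv_bars_if_in_pv:
  assumes S: "is_sg S" and U: "in_pv {S} U"
  shows "in_pv (bar ` {T :: nat sgr. in_pv {S} T}) U"
proof -
  obtain n where "fin_sg U" and U_dvd: "divides U (sg_power S n)" using U in_pv_singleton_iff by blast
  then obtain U0 :: "nat sgr" where U0: "fin_sg U0" "divides U U0" "divides U0 U"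
    using ex_nat_copy by blast
  have "is_sg U0" using U0(1) by (simp add: fin_sg_def)
  have "in_pv {S} U0"
    unfolding in_pv_singleton_iff using U0(1) divides_trans[OF U0(3) U_dvd is_sg_sg_power[OF S]] by blast
  have "divides U (prod_sg [bar U0])"
    using divides_trans[OF U0(2) divides_bar_self[OF \<open>is_sg U0\<close>] is_sg_bar[OF \<open>is_sg U0\<close>]]
      divides_prod_sg_singleton[OF is_sg_bar[OF \<open>is_sg U0\<close>]]
    by (rule divides_trans) (use is_sg_bar[OF \<open>is_sg U0\<close>] in \<open>auto intro: is_sg_prod_sg\<close>)
  moreover have "set [bar U0] \<subseteq> bar ` {T :: nat sgr. in_pv {S} T}" using \<open>in_pv {S} U0\<close> by simp
  ultimately show ?thesis using \<open>fin_sg U\<close> unfolding in_pv_def by blast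
qed

theorem corollary2p6:
  fixes S :: "'a sgr" and J :: "'a set" and U :: "'b sgr"
  assumes "fin_sg S"
    and "minimal_ideal S J"
    and "\<forall>z\<in>J. right_zero S z"
    and "faithful_right S J"
  shows "in_pv (bar ` {T :: nat sgr. in_pv {S} T}) U \<longleftrightarrow> in_pv {S} U"
proof -
  have S: "is_sg S" using assms(1) by (simp add: fin_sg_def)
  then have "faithful_right_zero_ideal S J"
    using assms(2-4) by (simp add: faithful_right_zero_ideal_def minimal_ideal_def)
  then show ?thesis using in_pv_if_in_pv_bars[OF assms(1)] in_pv_bars_if_in_pv[OF S] by blast
qed

end
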